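(* Let $H$ be a complex Hilbert space with inner product $\langle\cdot,\cdot\rangle$. Let $(e_k)_{k\ge0}$ and $(f_k)_{k\ge0}$ be sequences in $H$ with $\langle e_j,f_k\rangle=0$ for $j\ne k$ and $\langle e_k,f_k\rangle\ne0$ for all $k$. Let $P_k(h):=\frac{\langle h,f_k\rangle}{\langle e_k,f_k\rangle}e_k$, so $\|P_k\|=\|e_k\|\|f_k\|/|\langle e_k,f_k\rangle|$. Let $A=(a_{nk})_{n,k\ge0}$ be complex scalars with $\sum_{k\ge0}|a_{nk}|\|P_k\|<\infty$ for each $n$, and define \[ S_n^A(h):=\sum_{k\ge0}a_{nk}\frac{\langle h,f_k\rangle}{\langle e_k,f_k\rangle}e_k,\qquad (S_n^A)^*(h)=\sum_{k\ge0}\overline{a_{nk}}\frac{\langle h,e_k\rangle}{\langle f_k,e_k\rangle}f_k. \] Then the following are equivalent: (i) $S_n^A(h)\to h$ weakly for all $h\in H$; (ii) $S_n^A(h)\to h$ in norm for all $h\in H$; (iii) $(S_n^A)^*(h)\to h$ weakly for all $h\in H$; (iv) $(S_n^A)^*(h)\to h$ in norm for all $h\in H$.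
   Context: $(S_n^A)^*$ is the Hilbert-space adjoint of $S_n^A$. *)

theory Defs
  imports "HOL-Analysis.Analysis"
begin

class complex_vector = real_vector +
  fixes scaleC :: "complex \<Rightarrow> 'a \<Rightarrow> 'a"
  assumes scaleC_add_right: "scaleC a (x + y) = scaleC a x + scaleC a y"
    and scaleC_add_left: "scaleC (a + b) x = scaleC a x + scaleC b x"
    and scaleC_scaleC: "scaleC a (scaleC b x) = scaleC (a * b) x"
    and scaleC_one: "scaleC 1 x = x"
    and scaleR_scaleC: "scaleR r x = scaleC (complex_of_real r) x"

class complex_inner = complex_vector + real_normed_vector +
  fixes cinner :: "'a \<Rightarrow> 'a \<Rightarrow> complex"
  assumes cinner_add_left: "cinner (x + y) z = cinner x z + cinner y z"
    and cinner_scaleC_left: "cinner (scaleC r x) y = r * cinner x y"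
    and cinner_commute: "cinner x y = cnj (cinner y x)"
    and cinner_ge_zero: "0 \<le> Re (cinner x x)"
    and cinner_eq_zero_iff: "cinner x x = 0 \<longleftrightarrow> x = 0"
    and norm_eq_sqrt_cinner: "norm x = sqrt (Re (cinner x x))"

class chilbert_space = complex_inner + complete_space

definition SA :: "(nat \<Rightarrow> nat \<Rightarrow> complex) \<Rightarrow> (nat \<Rightarrow> 'a::chilbert_space) \<Rightarrow> (nat \<Rightarrow> 'a)
    \<Rightarrow> nat \<Rightarrow> 'a \<Rightarrow> 'a" where
  "SA a e f n h = (\<Sum>k. scaleC (a n k * (cinner h (f k) / cinner (e k) (f k))) (e k))"

definition SA_adj :: "(nat \<Rightarrow> nat \<Rightarrow> complex) \<Rightarrow> (nat \<Rightarrow> 'a::chilbert_space) \<Rightarrow> (nat \<Rightarrow> 'a)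
    \<Rightarrow> nat \<Rightarrow> 'a \<Rightarrow> 'a" where
  "SA_adj a e f n h = (\<Sum>k. scaleC (cnj (a n k) * (cinner h (e k) / cinner (f k) (e k))) (f k))"

definition weak_conv :: "(nat \<Rightarrow> 'a::chilbert_space) \<Rightarrow> 'a \<Rightarrow> bool" where
  "weak_conv x l \<longleftrightarrow> (\<forall>y. (\<lambda>n. cinner (x n) y) \<longlonglongrightarrow> cinner l y)"

end

theory Submission
  imports Defs
begin

text \<open>Norm convergence implies weak convergence, and since S_n^A and (S_n^A)^* are adjoint,
  weak convergence of one to the identity is weak convergence of the other. Moreover (S_n^A)^* is
  the operator of the same kind for the swapped system (f_k, e_k) with conjugated coefficients, so
  it remains to show that weak convergence implies norm convergence. If S_n^A h tends weakly to h
  for all h, the operators are uniformly bounded (uniform boundedness principle, used twice), and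
  testing on e_k against f_k shows a_nk tends to 1, so S_n^A converges in norm on the span V of the
  e_k. Every S_n^A h lies in the closure of V; if v almost minimises the distance from x to V, then
  x - v is almost orthogonal to the closure of V, and the weak convergence of S_n^A (x - v) to x - v
  forces x - v to be small. So V is dense, and uniform boundedness propagates the convergence from V
  to the whole space.\<close>

subclass (in chilbert_space) banach ..

section \<open>Complex inner product spaces\<close>

lemma scaleC_zero_left [simp]: "scaleC 0 (x::'a::complex_vector) = 0"
proof -
  have "scaleC 0 x = scaleC 0 x + scaleC 0 x" using scaleC_add_left[of 0 0 x] by simp
  then show ?thesis by simp
qed

lemma scaleC_zero_right [simp]: "scaleC c (0::'a::complex_vector) = 0"
proof -
  have "scaleC c (0::'a) = scaleC c 0 + scaleC c 0" using scaleC_add_right[of c 0 0] by simp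
  then show ?thesis by simp
qed

lemma scaleC_sum_right: "scaleC c (sum g A::'a::complex_vector) = (\<Sum>i\<in>A. scaleC c (g i))"
  by (induction A rule: infinite_finite_induct) (auto simp: scaleC_add_right)

lemma cinner_zero_left [simp]: "cinner (0::'a::complex_inner) y = 0"
proof -
  have "cinner (0::'a) y = cinner 0 y + cinner 0 y" using cinner_add_left[of 0 0 y] by simp
  then show ?thesis by simp
qed

lemma cinner_zero_right [simp]: "cinner (x::'a::complex_inner) 0 = 0"
  by (subst cinner_commute) simp

lemma cinner_minus_left: "cinner (- x::'a::complex_inner) y = - cinner x y"
proof -
  have "cinner (- x) y + cinner x y = 0" using cinner_add_left[of "-x" x y] by simp
  then show ?thesis by (simp add: eq_neg_iff_add_eq_0)
qed

lemma cinner_diff_left: "cinner (x - z::'a::complex_inner) y = cinner x y - cinner z y"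
  by (simp only: diff_conv_add_uminus cinner_add_left cinner_minus_left)

lemma cinner_add_right: "cinner (x::'a::complex_inner) (y + z) = cinner x y + cinner x z"
  by (subst (1 2 3) cinner_commute) (simp add: cinner_add_left)

lemma cinner_diff_right: "cinner (x::'a::complex_inner) (y - z) = cinner x y - cinner x z"
  by (subst (1 2 3) cinner_commute) (simp add: cinner_diff_left)

lemma cinner_scaleC_right: "cinner (x::'a::complex_inner) (scaleC r y) = cnj r * cinner x y"
  by (subst (1 2) cinner_commute) (simp add: cinner_scaleC_left)

lemma cinner_scaleR_left: "cinner (scaleR r x::'a::complex_inner) y = of_real r * cinner x y"
  by (simp add: scaleR_scaleC cinner_scaleC_left)

lemma cinner_scaleR_right: "cinner (x::'a::complex_inner) (scaleR r y) = of_real r * cinner x y"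
  by (simp add: scaleR_scaleC cinner_scaleC_right)

lemma cinner_self: "cinner (x::'a::complex_inner) x = of_real ((norm x)\<^sup>2)"
proof -
  have "Im (cinner x x) = - Im (cinner x x)" using arg_cong[OF cinner_commute[of x x], of Im] by simp
  then have "Im (cinner x x) = 0" by simp
  moreover have "Re (cinner x x) = (norm x)\<^sup>2"
    using norm_eq_sqrt_cinner[of x] cinner_ge_zero[of x] by simp
  ultimately show ?thesis by (simp add: complex_eq_iff)
qed

lemma cmod_cinner_self: "cmod (cinner (x::'a::complex_inner) x) = (norm x)\<^sup>2"
  by (simp add: cinner_self norm_power)

lemma cmod_cinner_commute: "cmod (cinner (x::'a::complex_inner) y) = cmod (cinner y x)"
  by (subst cinner_commute) (simp only: complex_mod_cnj)

lemma norm_scaleC: "norm (scaleC c (x::'a::complex_inner)) = cmod c * norm x"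
proof -
  have "of_real ((norm (scaleC c x))\<^sup>2) = cinner (scaleC c x) (scaleC c x)"
    by (simp add: cinner_self)
  also have "\<dots> = (c * cnj c) * cinner x x"
    by (simp add: cinner_scaleC_left cinner_scaleC_right)
  also have "\<dots> = of_real ((cmod c * norm x)\<^sup>2)"
    by (simp only: cinner_self complex_norm_square[symmetric] power_mult_distrib of_real_mult
        of_real_power)
  finally have "(norm (scaleC c x))\<^sup>2 = (cmod c * norm x)\<^sup>2"
    using of_real_eq_iff by blast
  then show ?thesis by simp
qed

lemma norm_diff_projection_squared:
  fixes x y :: "'a::complex_inner"
  assumes "y \<noteq> 0"
  shows "(norm (x - scaleC (cinner x y / of_real ((norm y)\<^sup>2)) y))\<^sup>2
         = (norm x)\<^sup>2 - (cmod (cinner x y))\<^sup>2 / (norm y)\<^sup>2"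
proof -
  define c where "c = cinner x y"
  define N where "N = (norm y)\<^sup>2"
  define t where "t = c / of_real N"
  have N: "N \<noteq> 0" using assms by (simp add: N_def)
  have cc: "c * cnj c = of_real ((cmod c)\<^sup>2)" by (metis complex_norm_square)
  have e1: "cnj t * c = of_real ((cmod c)\<^sup>2 / N)" using cc by (simp add: t_def mult.commute)
  have e2: "t * cnj c = of_real ((cmod c)\<^sup>2 / N)" using cc by (simp add: t_def)
  have e3: "t * cnj t * cinner y y = of_real ((cmod c)\<^sup>2 / N)"
  proof -
    have "t * cnj t * cinner y y = (c * cnj c) / (of_real N * of_real N) * of_real N"
      by (simp add: t_def cinner_self N_def)
    also have "\<dots> = of_real ((cmod c)\<^sup>2 / N)" using N cc by (simp add: field_simps)
    finally show ?thesis .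
  qed
  have "cinner (x - scaleC t y) (x - scaleC t y)
        = cinner x x - cnj t * c - t * cnj c + t * cnj t * cinner y y"
    by (simp add: cinner_diff_left cinner_diff_right cinner_scaleC_left cinner_scaleC_right c_def
          algebra_simps cinner_commute[of y x])
  also have "\<dots> = of_real ((norm x)\<^sup>2 - (cmod c)\<^sup>2 / N)"
    unfolding e1 e2 e3 cinner_self[of x] by simp
  finally show ?thesis unfolding t_def c_def N_def
    by (metis cinner_self of_real_eq_iff)
qed

lemma cmod_cinner_le: "cmod (cinner (x::'a::complex_inner) y) \<le> norm x * norm y"
proof (cases "y = 0")
  case False
  have "0 \<le> (norm (x - scaleC (cinner x y / of_real ((norm y)\<^sup>2)) y))\<^sup>2" by (rule zero_le_power2)
  then have "(cmod (cinner x y))\<^sup>2 / (norm y)\<^sup>2 \<le> (norm x)\<^sup>2"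
    unfolding norm_diff_projection_squared[OF False] by linarith
  then have "(cmod (cinner x y))\<^sup>2 \<le> (norm x * norm y)\<^sup>2"
    using False by (simp add: pos_divide_le_eq power_mult_distrib)
  then show ?thesis by (rule power2_le_imp_le) simp
qed simp

lemma cmod_cinner_squared_le_if_nearly_minimal:
  fixes w u :: "'a::complex_inner"
  assumes "\<And>t. (norm w)\<^sup>2 \<le> (norm (w - scaleC t u))\<^sup>2 + \<delta>"
  shows "(cmod (cinner w u))\<^sup>2 \<le> \<delta> * (norm u)\<^sup>2"
proof (cases "u = 0")
  case True then show ?thesis using assms[of 0] by simp
next
  case False
  have "(norm w)\<^sup>2 \<le> (norm w)\<^sup>2 - (cmod (cinner w u))\<^sup>2 / (norm u)\<^sup>2 + \<delta>"
    using assms[of "cinner w u / of_real ((norm u)\<^sup>2)"] unfolding norm_diff_projection_squared[OF False] .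
  then show ?thesis using False by (simp add: divide_le_eq)
qed

lemma bounded_linear_cinner_left: "bounded_linear (\<lambda>x. cinner (x::'a::complex_inner) y)"
  by (rule bounded_linear_intro[where K="norm y"])
     (auto simp: cinner_add_left cinner_scaleR_left scaleR_conv_of_real cmod_cinner_le)

lemma bounded_linear_cinner_right: "bounded_linear (\<lambda>y. cinner (x::'a::complex_inner) y)"
  by (rule bounded_linear_intro[where K="norm x"])
     (auto simp: cinner_add_right cinner_scaleR_right scaleR_conv_of_real,
      metis cmod_cinner_le mult.commute)

lemma bounded_linear_scaleC_right: "bounded_linear (scaleC c :: 'a::complex_inner \<Rightarrow> 'a)"
proof (rule bounded_linear_intro[where K="cmod c"])
  fix r x show "scaleC c (r *\<^sub>R (x::'a)) = r *\<^sub>R scaleC c x"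
    by (simp add: scaleR_scaleC scaleC_scaleC mult.commute)
qed (auto simp: scaleC_add_right norm_scaleC)

lemma bounded_linear_scaleC_left: "bounded_linear (\<lambda>c. scaleC c (x::'a::complex_inner))"
proof (rule bounded_linear_intro[where K="norm x"])
  fix r :: real and c :: complex
  show "scaleC (r *\<^sub>R c) x = r *\<^sub>R scaleC c x"
    by (simp add: scaleR_conv_of_real scaleR_scaleC scaleC_scaleC)
qed (auto simp: scaleC_add_left norm_scaleC)

lemma tendsto_imp_weak_conv: "X \<longlonglongrightarrow> l \<Longrightarrow> weak_conv X (l::'a::chilbert_space)"
  unfolding weak_conv_def by (auto intro: bounded_linear.tendsto[OF bounded_linear_cinner_left])

section \<open>Uniform boundedness\<close>

lemma Baire_uniform_bound_on_ball:
  fixes T :: "'i \<Rightarrow> 'a::banach \<Rightarrow> 'b::real_normed_vector"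
  assumes cont: "\<And>i. continuous_on UNIV (T i)" and bounded: "\<And>x. \<exists>B. \<forall>i. norm (T i x) \<le> B"
  shows "\<exists>x0 r m. 0 < r \<and> 0 \<le> m \<and> (\<forall>i. \<forall>y\<in>ball x0 r. norm (T i y) \<le> m)"
proof -
  define F where "F m = {x. \<forall>i. norm (T i x) \<le> real m}" for m :: nat
  have closed_F: "closed (F m)" for m
  proof -
    have "F m = (\<Inter>i. {x. norm (T i x) \<le> real m})" by (auto simp: F_def)
    moreover have "closed {x. norm (T i x) \<le> real m}" for i
      by (intro closed_Collect_le continuous_on_norm cont continuous_on_const)
    ultimately show ?thesis by auto
  qed
  have "\<Union>(range F) = UNIV"
  proof safe
    fix x
    obtain B where "\<forall>i. norm (T i x) \<le> B" using bounded by blast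
    then have "x \<in> F (nat \<lceil>B\<rceil>)" by (auto simp: F_def intro: order_trans[OF _ real_nat_ceiling_ge])
    then show "x \<in> \<Union>(range F)" by blast
  qed simp
  have "\<exists>m. interior (F m) \<noteq> {}"
  proof (rule ccontr)
    assume "\<nexists>m. interior (F m) \<noteq> {}"
    then have "euclidean interior_of \<Union>(range F) = {}"
      by (intro Baire_category_alt)
        (auto simp: completely_metrizable_space_euclidean closed_F simp flip: closed_closedin)
    with \<open>\<Union>(range F) = UNIV\<close> show False by simp
  qed
  then obtain m x0 where "x0 \<in> interior (F m)" by blast
  then obtain r where "r > 0" "ball x0 r \<subseteq> F m"
    by (meson interior_subset open_contains_ball open_interior subset_trans)
  then have "\<forall>i. \<forall>y\<in>ball x0 r. norm (T i y) \<le> real m" unfolding F_def by blast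
  with \<open>r > 0\<close> show ?thesis by (intro exI[of _ x0] exI[of _ r] exI[of _ "real m"]) simp
qed

lemma bounded_linear_bound_from_ball:
  fixes T :: "'a::real_normed_vector \<Rightarrow> 'b::real_normed_vector"
  assumes lin: "bounded_linear T" and r: "0 < r" and ball: "\<forall>y\<in>ball x0 r. norm (T y) \<le> m"
  shows "norm (T x) \<le> (4 * m / r) * norm x"
proof -
  interpret T: bounded_linear T by (fact lin)
  have small: "norm (T y) \<le> 2 * m" if "norm y < r" for y
  proof -
    have "norm (T (x0 + y)) \<le> m" "norm (T x0) \<le> m" using ball r that by (auto simp: dist_norm)
    moreover have "T y = T (x0 + y) - T x0" by (simp add: T.add)
    ultimately show ?thesis using norm_triangle_ineq4[of "T (x0 + y)" "T x0"] by simp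
  qed
  show ?thesis
  proof (cases "x = 0")
    case False
    define c where "c = r / (2 * norm x)"
    have c: "c > 0" using r False by (simp add: c_def)
    have "norm (c *\<^sub>R x) < r" using r False by (simp add: c_def)
    then have "norm (T (c *\<^sub>R x)) \<le> 2 * m" by (rule small)
    then have "c * norm (T x) \<le> 2 * m" using c by (simp add: T.scaleR)
    then have "norm (T x) \<le> 2 * m / c" using c by (simp add: field_simps)
    also have "\<dots> = (4 * m / r) * norm x" using r False by (simp add: c_def field_simps)
    finally show ?thesis .
  qed simp
qed

theorem uniform_boundedness:
  fixes T :: "'i \<Rightarrow> 'a::banach \<Rightarrow> 'b::real_normed_vector"
  assumes lin: "\<And>i. bounded_linear (T i)" and bounded: "\<And>x. \<exists>B. \<forall>i. norm (T i x) \<le> B"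
  shows "\<exists>M\<ge>0. \<forall>i x. norm (T i x) \<le> M * norm x"
proof -
  obtain x0 r m where "0 < r" "0 \<le> m" "\<forall>i. \<forall>y\<in>ball x0 r. norm (T i y) \<le> m"
    using Baire_uniform_bound_on_ball[OF linear_continuous_on[OF lin] bounded] by blast
  then have "norm (T i x) \<le> (4 * m / r) * norm x" for i x
    using bounded_linear_bound_from_ball[OF lin] by blast
  then show ?thesis using \<open>0 < r\<close> \<open>0 \<le> m\<close> by (intro exI[of _ "4 * m / r"]) auto
qed

lemma uniformly_bounded_if_weakly_convergent:
  fixes T :: "nat \<Rightarrow> 'a::chilbert_space \<Rightarrow> 'a"
  assumes lin: "\<And>n. bounded_linear (T n)" and conv: "\<And>x y. convergent (\<lambda>n. cinner (T n x) y)"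
  shows "\<exists>M\<ge>0. \<forall>n x. norm (T n x) \<le> M * norm x"
proof (rule uniform_boundedness[OF lin])
  fix x
  have "\<exists>M\<ge>0. \<forall>n y. cmod (cinner (T n x) y) \<le> M * norm y"
  proof (rule uniform_boundedness)
    show "\<exists>B. \<forall>n. cmod (cinner (T n x) y) \<le> B" for y
      using convergent_imp_Bseq[OF conv] by (meson BseqE)
  qed (rule bounded_linear_cinner_right)
  then obtain M where "0 \<le> M" and M: "\<And>n y. cmod (cinner (T n x) y) \<le> M * norm y" by blast
  have "norm (T n x) \<le> M" for n
  proof (cases "T n x = 0")
    case False
    have "norm (T n x) * norm (T n x) \<le> M * norm (T n x)"
      using M[of n "T n x"] by (simp add: cmod_cinner_self power2_eq_square)
    then show ?thesis by (rule mult_right_le_imp_le) (use False in simp)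
  qed (use \<open>0 \<le> M\<close> in simp)
  then show "\<exists>B. \<forall>n. norm (T n x) \<le> B" by blast
qed

section \<open>Density of a subspace\<close>

definition csubspace :: "'a::complex_vector set \<Rightarrow> bool" where
  "csubspace V \<longleftrightarrow> 0 \<in> V \<and> (\<forall>x\<in>V. \<forall>y\<in>V. \<forall>c. x + scaleC c y \<in> V)"

lemma csubspace_near_orthogonal_residual:
  fixes V :: "'a::complex_inner set"
  assumes V: "csubspace V" and \<delta>: "0 < \<delta>"
  shows "\<exists>v\<in>V. \<forall>u\<in>closure V. cmod (cinner (x - v) u) \<le> \<delta> * norm u"
proof -
  define D where "D = (\<lambda>v. (norm (x - v))\<^sup>2) ` V"
  have D: "D \<noteq> {}" "bdd_below D"
    using V unfolding D_def csubspace_def by (auto intro: bdd_belowI[of _ 0])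
  have "\<exists>d\<in>D. d < Inf D + \<delta>\<^sup>2"
    using \<delta> by (subst cInf_less_iff[OF D, symmetric]) simp
  then obtain v where v: "v \<in> V" and v_min: "(norm (x - v))\<^sup>2 < Inf D + \<delta>\<^sup>2"
    unfolding D_def by blast
  have orth: "cmod (cinner (x - v) u) \<le> \<delta> * norm u" if u: "u \<in> V" for u
  proof -
    have "(cmod (cinner (x - v) u))\<^sup>2 \<le> \<delta>\<^sup>2 * (norm u)\<^sup>2"
    proof (rule cmod_cinner_squared_le_if_nearly_minimal)
      fix t
      have "v + scaleC t u \<in> V" using V u v unfolding csubspace_def by blast
      then have "Inf D \<le> (norm (x - (v + scaleC t u)))\<^sup>2"
        unfolding D_def by (rule cInf_lower[OF imageI D(2)[unfolded D_def]])
      moreover have "x - (v + scaleC t u) = x - v - scaleC t u" by (simp only: diff_diff_eq)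
      ultimately show "(norm (x - v))\<^sup>2 \<le> (norm (x - v - scaleC t u))\<^sup>2 + \<delta>\<^sup>2"
        using v_min by simp
    qed
    then have "(cmod (cinner (x - v) u))\<^sup>2 \<le> (\<delta> * norm u)\<^sup>2" by (simp only: power_mult_distrib)
    then show ?thesis by (rule power2_le_imp_le) (use \<delta> in simp)
  qed
  have "closed {u. cmod (cinner (x - v) u) \<le> \<delta> * norm u}"
    by (intro closed_Collect_le continuous_on_norm continuous_on_mult_left continuous_on_norm_id
        linear_continuous_on bounded_linear_cinner_right)
  then have "closure V \<subseteq> {u. cmod (cinner (x - v) u) \<le> \<delta> * norm u}"
    using orth by (intro closure_minimal) auto
  then show ?thesis using v by blast
qed

lemma csubspace_dense_if_weak_approximate_identity:
  fixes T :: "nat \<Rightarrow> 'a::complex_inner \<Rightarrow> 'a"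
  assumes V: "csubspace V" and M: "0 \<le> M" and bound: "\<And>n x. norm (T n x) \<le> M * norm x"
    and range: "\<And>n x. T n x \<in> closure V"
    and weak: "\<And>x. (\<lambda>n. cinner (T n x) x) \<longlonglongrightarrow> cinner x x"
  shows "closure V = UNIV"
proof -
  have "x \<in> closure V" for x
  proof (rule closure_approachable[THEN iffD2, rule_format])
    fix \<epsilon> :: real assume \<epsilon>: "0 < \<epsilon>"
    define \<delta> where "\<delta> = \<epsilon> / (M + 1)"
    have \<delta>: "0 < \<delta>" unfolding \<delta>_def using \<epsilon> M by (intro divide_pos_pos) auto
    obtain v where v: "v \<in> V" and orth: "\<forall>u\<in>closure V. cmod (cinner (x - v) u) \<le> \<delta> * norm u"
      using csubspace_near_orthogonal_residual[OF V \<delta>] by blast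
    define w where "w = x - v"
    \<comment> \<open>w is almost orthogonal to the range of T n, yet T n w tends weakly to w.\<close>
    have bound_w: "cmod (cinner (T n w) w) \<le> \<delta> * (M * norm w)" for n
    proof -
      have "cmod (cinner (T n w) w) = cmod (cinner w (T n w))" by (rule cmod_cinner_commute)
      also have "\<dots> \<le> \<delta> * norm (T n w)" using orth range unfolding w_def by blast
      also have "\<dots> \<le> \<delta> * (M * norm w)" using \<delta> bound[of n w] by simp
      finally show ?thesis .
    qed
    have "(\<lambda>n. cmod (cinner (T n w) w)) \<longlonglongrightarrow> (norm w)\<^sup>2"
      using tendsto_norm[OF weak[of w]] by (simp add: cmod_cinner_self)
    then have "(norm w)\<^sup>2 \<le> \<delta> * (M * norm w)"
      by (rule LIMSEQ_le_const2) (use bound_w in blast)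
    then have "norm w * norm w \<le> (\<delta> * M) * norm w" by (simp add: power2_eq_square mult.assoc)
    then have "norm w \<le> \<delta> * M"
      using \<delta> M by (cases "w = 0") (auto intro: mult_right_le_imp_le)
    also have "\<dots> < \<epsilon>" using \<epsilon> M by (simp add: \<delta>_def divide_simps)
    finally have "dist v x < \<epsilon>" unfolding w_def dist_norm by (simp only: norm_minus_commute)
    then show "\<exists>y\<in>V. dist y x < \<epsilon>" using v by blast
  qed
  then show ?thesis by blast
qed

lemma tendsto_on_closure_if_uniformly_bounded:
  fixes T :: "nat \<Rightarrow> 'a::real_normed_vector \<Rightarrow> 'a"
  assumes lin: "\<And>n. linear (T n)" and M: "0 \<le> M" and bound: "\<And>n x. norm (T n x) \<le> M * norm x"
    and conv: "\<And>v. v \<in> V \<Longrightarrow> (\<lambda>n. T n v) \<longlonglongrightarrow> v" and x: "x \<in> closure V"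
  shows "(\<lambda>n. T n x) \<longlonglongrightarrow> x"
proof (rule LIMSEQ_I)
  fix r :: real assume r: "0 < r"
  define \<eta> where "\<eta> = r / 3 / (M + 1)"
  have \<eta>: "0 < \<eta>" unfolding \<eta>_def using r M by (intro divide_pos_pos) auto
  obtain v where v: "v \<in> V" and xv: "norm (x - v) < \<eta>"
    using closure_approachableD[OF x \<eta>] by (auto simp: dist_norm)
  obtain N where N: "\<forall>n\<ge>N. norm (T n v - v) < r / 3"
    using LIMSEQ_D[OF conv[OF v], of "r / 3"] r by auto
  have "norm (T n x - x) < r" if "n \<ge> N" for n
  proof -
    have split: "T n x - x = T n (x - v) + (T n v - v) - (x - v)"
      by (simp add: linear_diff[OF lin])
    have "norm (T n x - x) \<le> norm (T n (x - v)) + norm (T n v - v) + norm (x - v)"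
      unfolding split using norm_triangle_ineq4[of "T n (x - v) + (T n v - v)" "x - v"]
        norm_triangle_ineq[of "T n (x - v)" "T n v - v"] by linarith
    also have "\<dots> < M * \<eta> + r / 3 + \<eta>"
    proof -
      have "norm (T n (x - v)) \<le> M * norm (x - v)" by (rule bound)
      also have "\<dots> \<le> M * \<eta>" using xv M by (simp add: mult_left_mono)
      moreover have "norm (T n v - v) < r / 3" using N that by blast
      ultimately show ?thesis using xv by linarith
    qed
    also have "\<dots> \<le> r"
    proof -
      have "(M + 1) * \<eta> = r / 3" using M by (simp add: \<eta>_def divide_simps)
      then have "M * \<eta> + \<eta> = r / 3" by (simp add: ring_distribs)
      then show ?thesis using r by linarith
    qed
    finally show ?thesis .
  qed
  then show "\<exists>N. \<forall>n\<ge>N. norm (T n x - x) < r" by blast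
qed

section \<open>The summation operators\<close>

definition cspan_seq :: "(nat \<Rightarrow> 'a::complex_vector) \<Rightarrow> 'a set" where
  "cspan_seq e = {\<Sum>k<N. scaleC (c k) (e k) | N c. True}"

lemma sum_lessThan_scaleC_pad:
  fixes e :: "nat \<Rightarrow> 'a::complex_vector"
  shows "N \<le> N' \<Longrightarrow> (\<Sum>k<N. scaleC (c k) (e k)) = (\<Sum>k<N'. scaleC (if k < N then c k else 0) (e k))"
  by (rule sum.mono_neutral_cong_left) auto

lemma csubspace_cspan_seq: "csubspace (cspan_seq e)"
  unfolding csubspace_def
proof (intro conjI ballI allI)
  show "0 \<in> cspan_seq e" unfolding cspan_seq_def by (auto intro!: exI[of _ 0])
next
  fix v u t assume "v \<in> cspan_seq e" "u \<in> cspan_seq e"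
  then obtain N1 c1 N2 c2 where v: "v = (\<Sum>k<N1. scaleC (c1 k) (e k))"
    and u: "u = (\<Sum>k<N2. scaleC (c2 k) (e k))" unfolding cspan_seq_def by blast
  define N where "N = max N1 N2"
  define d1 where "d1 k = (if k < N1 then c1 k else 0)" for k
  define d2 where "d2 k = (if k < N2 then c2 k else 0)" for k
  have v': "v = (\<Sum>k<N. scaleC (d1 k) (e k))" unfolding v d1_def N_def by (rule sum_lessThan_scaleC_pad) simp
  have u': "u = (\<Sum>k<N. scaleC (d2 k) (e k))" unfolding u d2_def N_def by (rule sum_lessThan_scaleC_pad) simp
  have "v + scaleC t u = (\<Sum>k<N. scaleC (d1 k + t * d2 k) (e k))"
    unfolding v' u' by (simp add: scaleC_sum_right scaleC_add_left scaleC_scaleC sum.distrib)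
  then show "v + scaleC t u \<in> cspan_seq e"
    unfolding cspan_seq_def by (auto intro!: exI[of _ N] exI[of _ "\<lambda>k. d1 k + t * d2 k"])
qed

lemma SA_adj_eq: "SA_adj a e f = SA (\<lambda>n k. cnj (a n k)) f e"
  by (simp add: fun_eq_iff SA_def SA_adj_def)

lemma tendsto_cnj_iff: "(\<lambda>n. cnj (X n)) \<longlonglongrightarrow> cnj l \<longleftrightarrow> X \<longlonglongrightarrow> l"
  using tendsto_cnj[of "\<lambda>n. cnj (X n)" "cnj l"] tendsto_cnj[of X l] by auto

locale summable_SA =
  fixes e f :: "nat \<Rightarrow> 'a::chilbert_space" and a :: "nat \<Rightarrow> nat \<Rightarrow> complex"
  assumes summ: "\<And>n. summable (\<lambda>k. norm (a n k) *
                  (norm (e k) * norm (f k) / norm (cinner (e k) (f k))))"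
begin

lemma norm_SA_term_le:
  "norm (scaleC (a n k * (cinner h (f k) / cinner (e k) (f k))) (e k))
   \<le> norm (a n k) * (norm (e k) * norm (f k) / norm (cinner (e k) (f k))) * norm h"
proof -
  have "norm (scaleC (a n k * (cinner h (f k) / cinner (e k) (f k))) (e k))
      = (norm (a n k) * norm (e k) / norm (cinner (e k) (f k))) * cmod (cinner h (f k))"
    by (simp add: norm_scaleC norm_mult norm_divide)
  also have "\<dots> \<le> (norm (a n k) * norm (e k) / norm (cinner (e k) (f k))) * (norm h * norm (f k))"
    by (intro mult_left_mono cmod_cinner_le) auto
  also have "\<dots> = norm (a n k) * (norm (e k) * norm (f k) / norm (cinner (e k) (f k))) * norm h"
    by (simp add: ac_simps)
  finally show ?thesis .
qed

lemma summable_norm_SA_terms: "summable (\<lambda>k. norm (scaleC (a n k * (cinner h (f k) / cinner (e k) (f k))) (e k)))"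
  by (rule summable_comparison_test'[OF summable_mult2[OF summ[of n], of "norm h"], where N=0])
    (simp only: real_norm_def abs_norm_cancel norm_SA_term_le)

lemma SA_sums: "(\<lambda>k. scaleC (a n k * (cinner h (f k) / cinner (e k) (f k))) (e k)) sums SA a e f n h"
  unfolding SA_def by (rule summable_sums[OF summable_norm_cancel[OF summable_norm_SA_terms]])

lemma norm_SA_le:
  "norm (SA a e f n h)
   \<le> norm h * (\<Sum>k. norm (a n k) * (norm (e k) * norm (f k) / norm (cinner (e k) (f k))))"
proof -
  have "norm (SA a e f n h) \<le> (\<Sum>k. norm (scaleC (a n k * (cinner h (f k) / cinner (e k) (f k))) (e k)))"
    unfolding SA_def by (rule summable_norm[OF summable_norm_SA_terms])
  also have "\<dots> \<le> (\<Sum>k. norm (a n k) * (norm (e k) * norm (f k) / norm (cinner (e k) (f k))) * norm h)"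
    by (intro suminf_le norm_SA_term_le summable_norm_SA_terms summable_mult2 summ)
  also have "\<dots> = (\<Sum>k. norm (a n k) * (norm (e k) * norm (f k) / norm (cinner (e k) (f k)))) * norm h"
    by (rule suminf_mult2[symmetric, OF summ])
  finally show ?thesis by (simp only: mult.commute)
qed

lemma SA_add: "SA a e f n (x + y) = SA a e f n x + SA a e f n y"
proof -
  have "(\<lambda>k. scaleC (a n k * (cinner (x + y) (f k) / cinner (e k) (f k))) (e k)) sums (SA a e f n x + SA a e f n y)"
    using sums_add[OF SA_sums[of n x] SA_sums[of n y]]
    by (simp add: cinner_add_left add_divide_distrib distrib_left scaleC_add_left)
  then show ?thesis by (rule sums_unique2[OF SA_sums])
qed

lemma SA_scaleC: "SA a e f n (scaleC c x) = scaleC c (SA a e f n x)"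
proof -
  have "(\<lambda>k. scaleC (a n k * (cinner (scaleC c x) (f k) / cinner (e k) (f k))) (e k)) sums scaleC c (SA a e f n x)"
    using bounded_linear.sums[OF bounded_linear_scaleC_right SA_sums[of n x]]
    by (simp add: cinner_scaleC_left scaleC_scaleC ac_simps)
  then show ?thesis by (rule sums_unique2[OF SA_sums])
qed

lemma bounded_linear_SA: "bounded_linear (SA a e f n)"
  by (rule bounded_linear_intro[OF SA_add _ norm_SA_le]) (simp only: scaleR_scaleC SA_scaleC)

lemma SA_in_closure_cspan_seq: "SA a e f n h \<in> closure (cspan_seq e)"
  unfolding closure_sequential
proof (intro exI conjI allI)
  show "(\<lambda>N. \<Sum>k<N. scaleC (a n k * (cinner h (f k) / cinner (e k) (f k))) (e k)) \<longlonglongrightarrow> SA a e f n h"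
    using SA_sums unfolding sums_def .
qed (auto simp: cspan_seq_def)

lemma cinner_SA_sums:
  "(\<lambda>k. a n k * (cinner h (f k) / cinner (e k) (f k)) * cinner (e k) y) sums cinner (SA a e f n h) y"
  using bounded_linear.sums[OF bounded_linear_cinner_left SA_sums] by (simp add: cinner_scaleC_left)

lemma summable_SA_adj: "summable_SA f e (\<lambda>n k. cnj (a n k))"
  by unfold_locales (use summ in \<open>simp add: cmod_cinner_commute[of "f _"] mult.commute\<close>)

lemma cinner_SA_eq_cinner_SA_adj: "cinner (SA a e f n h) y = cinner h (SA_adj a e f n y)"
proof -
  interpret adj: summable_SA f e "\<lambda>n k. cnj (a n k)" by (rule summable_SA_adj)
  have "(\<lambda>k. cinner h (scaleC (cnj (a n k) * (cinner y (e k) / cinner (f k) (e k))) (f k)))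
        sums cinner h (SA_adj a e f n y)"
    unfolding SA_adj_eq by (rule bounded_linear.sums[OF bounded_linear_cinner_right adj.SA_sums])
  moreover have "cinner h (scaleC (cnj (a n k) * (cinner y (e k) / cinner (f k) (e k))) (f k))
      = a n k * (cinner h (f k) / cinner (e k) (f k)) * cinner (e k) y" for k
    by (simp add: cinner_scaleC_right cinner_commute[of y "e k"] cinner_commute[of "f k" "e k"])
  ultimately show ?thesis using sums_unique2[OF cinner_SA_sums] by simp
qed

lemma weak_conv_SA_iff_SA_adj:
  "(\<forall>h. weak_conv (\<lambda>n. SA a e f n h) h) \<longleftrightarrow> (\<forall>h. weak_conv (\<lambda>n. SA_adj a e f n h) h)"
proof -
  have "(\<lambda>n. cinner (SA a e f n h) y) \<longlonglongrightarrow> cinner h y \<longleftrightarrow>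
        (\<lambda>n. cinner (SA_adj a e f n y) h) \<longlonglongrightarrow> cinner y h" for h y
    using tendsto_cnj_iff[of "\<lambda>n. cinner (SA_adj a e f n y) h" "cinner y h"]
    by (simp add: cinner_SA_eq_cinner_SA_adj cinner_commute[of h])
  then show ?thesis unfolding weak_conv_def by blast
qed

end

locale biorthogonal_SA = summable_SA +
  assumes biorth: "\<And>j k. j \<noteq> k \<Longrightarrow> cinner (e j) (f k) = 0"
    and nondeg: "\<And>k. cinner (e k) (f k) \<noteq> 0"
begin

lemma biorthogonal_SA_adj: "biorthogonal_SA f e (\<lambda>n k. cnj (a n k))"
proof -
  interpret adj: summable_SA f e "\<lambda>n k. cnj (a n k)" by (rule summable_SA_adj)
  show ?thesis
    by unfold_locales
      (use biorth nondeg in \<open>auto simp: cinner_commute[of "f _"]\<close>)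
qed

lemma SA_basis_vector: "SA a e f n (e j) = scaleC (a n j) (e j)"
proof -
  have "(\<lambda>k. scaleC (a n k * (cinner (e j) (f k) / cinner (e k) (f k))) (e k))
      = (\<lambda>k. if k = j then scaleC (a n j) (e j) else 0)"
    using biorth nondeg by (auto simp: fun_eq_iff)
  then show ?thesis unfolding SA_def by (simp add: sums_unique[OF sums_single, symmetric])
qed

lemma coeff_tendsto_one_if_weak_conv_SA:
  assumes weak: "\<forall>h. weak_conv (\<lambda>n. SA a e f n h) h"
  shows "(\<lambda>n. a n k) \<longlonglongrightarrow> 1"
proof -
  have "(\<lambda>n. cinner (SA a e f n (e k)) (f k)) \<longlonglongrightarrow> cinner (e k) (f k)"
    using weak unfolding weak_conv_def by blast
  then have "(\<lambda>n. a n k * cinner (e k) (f k)) \<longlonglongrightarrow> 1 * cinner (e k) (f k)"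
    by (simp add: SA_basis_vector cinner_scaleC_left)
  then show ?thesis by (rule tendsto_mult_right_iff[OF nondeg, THEN iffD1])
qed

lemma SA_tendsto_on_cspan_seq:
  assumes coeff: "\<And>k. (\<lambda>n. a n k) \<longlonglongrightarrow> 1" and v: "v \<in> cspan_seq e"
  shows "(\<lambda>n. SA a e f n v) \<longlonglongrightarrow> v"
proof -
  obtain N c where v_eq: "v = (\<Sum>k<N. scaleC (c k) (e k))" using v unfolding cspan_seq_def by blast
  have "SA a e f n v = (\<Sum>k<N. scaleC (c k * a n k) (e k))" for n
    unfolding v_eq linear_sum[OF bounded_linear.linear[OF bounded_linear_SA]]
    by (simp add: SA_scaleC SA_basis_vector scaleC_scaleC)
  moreover have "(\<lambda>n. \<Sum>k<N. scaleC (c k * a n k) (e k)) \<longlonglongrightarrow> (\<Sum>k<N. scaleC (c k * 1) (e k))"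
    by (intro tendsto_sum bounded_linear.tendsto[OF bounded_linear_scaleC_left] tendsto_mult
        tendsto_const coeff)
  ultimately show ?thesis unfolding v_eq by simp
qed

lemma SA_tendsto_if_weak_conv:
  assumes weak: "\<forall>h. weak_conv (\<lambda>n. SA a e f n h) h"
  shows "(\<lambda>n. SA a e f n h) \<longlonglongrightarrow> h"
proof -
  have weak': "(\<lambda>n. cinner (SA a e f n x) y) \<longlonglongrightarrow> cinner x y" for x y
    using weak unfolding weak_conv_def by blast
  obtain M where M: "0 \<le> M" and bound: "\<And>n x. norm (SA a e f n x) \<le> M * norm x"
    using uniformly_bounded_if_weakly_convergent[of "SA a e f", OF bounded_linear_SA]
      weak' convergentI by metis
  have "closure (cspan_seq e) = UNIV"
    by (rule csubspace_dense_if_weak_approximate_identity[OF csubspace_cspan_seq M bound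
          SA_in_closure_cspan_seq weak'])
  then show ?thesis
    using tendsto_on_closure_if_uniformly_bounded[OF bounded_linear.linear[OF bounded_linear_SA]
        M bound SA_tendsto_on_cspan_seq[OF coeff_tendsto_one_if_weak_conv_SA[OF weak]]] by blast
qed

lemma weak_conv_SA_iff_tendsto:
  "(\<forall>h. weak_conv (\<lambda>n. SA a e f n h) h) \<longleftrightarrow> (\<forall>h. (\<lambda>n. SA a e f n h) \<longlonglongrightarrow> h)"
  using SA_tendsto_if_weak_conv tendsto_imp_weak_conv by blast

end

theorem theorem6p2:
  fixes e f :: "nat \<Rightarrow> 'a::chilbert_space"
    and a :: "nat \<Rightarrow> nat \<Rightarrow> complex"
  assumes biorth: "\<And>j k. j \<noteq> k \<Longrightarrow> cinner (e j) (f k) = 0"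
    and nondeg: "\<And>k. cinner (e k) (f k) \<noteq> 0"
    and summ: "\<And>n. summable (\<lambda>k. norm (a n k) *
                  (norm (e k) * norm (f k) / norm (cinner (e k) (f k))))"
  shows "((\<forall>h. weak_conv (\<lambda>n. SA a e f n h) h) \<longleftrightarrow> (\<forall>h. (\<lambda>n. SA a e f n h) \<longlonglongrightarrow> h))
       \<and> ((\<forall>h. weak_conv (\<lambda>n. SA a e f n h) h) \<longleftrightarrow> (\<forall>h. weak_conv (\<lambda>n. SA_adj a e f n h) h))
       \<and> ((\<forall>h. weak_conv (\<lambda>n. SA a e f n h) h) \<longleftrightarrow> (\<forall>h. (\<lambda>n. SA_adj a e f n h) \<longlonglongrightarrow> h))"
proof -
  interpret biorthogonal_SA e f a
    using assms by unfold_locales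
  interpret adj: biorthogonal_SA f e "\<lambda>n k. cnj (a n k)"
    by (rule biorthogonal_SA_adj)
  show ?thesis
    using weak_conv_SA_iff_tendsto weak_conv_SA_iff_SA_adj adj.weak_conv_SA_iff_tendsto
    unfolding SA_adj_eq by blast
qed

end
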